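(* Let $K$ be a commutative field and $q\in K$. Define a coproduct $\Delta'_q$ on $\mathcal{H}_{\mathcal{PP}}$ by, for every plane poset $P$, $$\Delta'_q(P)=\sum_{P_1P_2=P}q^{|P_1||P_2|}P_1\otimes P_2,$$ the sum running over pairs of plane posets $(P_1,P_2)$ (possibly empty) with $P_1P_2=P$. Then for all $x,y,z\in\mathcal{H}_{\mathcal{PP}}$, $\langle x\triangleleft y,z\rangle_q=\langle x\otimes y,\Delta'_q(z)\rangle_q$.
   Context: A plane poset is a finite set with two partial orders $\leq_h,\leq_r$ such that two distinct elements are $\leq_h$-comparable iff they are not $\leq_r$-comparable, considered up to isomorphism; $\mathcal{H}_{\mathcal{PP}}$ is the $K$-vector space with basis these isomorphism classes; $|P|$ is the cardinality. $PQ$ is the plane poset on $P\sqcup Q$ with $P,Q$ plane subposets, no $\leq_h$-comparability between $P$ and $Q$, and $x<_r y$ for $x\in P,y\in Q$; $P\triangleleft Q$ is the plane poset on $P\sqcup Q$ with $P,Q$ plane subposets, no $\leq_r$-comparability between $P$ and $Q$, and $x<_h y$ for $x\in P,y\in Q$; both extended bilinearly. On a plane poset, $x\leq y$ iff ($x\leq_h y$ or $x\leq_r y$) is a total order (known fact); for $P,Q$ of equal cardinality $\theta_{P,Q}$ is the increasing bijection $P\to Q$, and $P\leq Q$ means: $\theta_{P,Q}(x)\leq_h\theta_{P,Q}(y)$ in $Q$ implies $x\leq_h y$ in $P$. $\iota(P)=(P,\leq_r,\leq_h)$. The pairing: $\langle P,Q\rangle_q=q^{\phi(P,Q)}$ if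 $\iota(P)\leq Q$ and $0$ otherwise, extended bilinearly, with $\phi(P,Q)=\sharp\{(x,y)\in P^2\mid x<_r y,\ \theta_{P,Q}(x)<_h\theta_{P,Q}(y)\}+\sharp\{(x,y)\in P^2\mid x<_h y,\ \theta_{P,Q}(x)<_r\theta_{P,Q}(y)\}$ and $q^0=1$; $\langle a\otimes b,c\otimes d\rangle_q=\langle a,c\rangle_q\langle b,d\rangle_q$. *)

theory Defs
  imports Main "HOL-Library.Poly_Mapping"
begin

definition partial_order_rel :: "'a set \<Rightarrow> 'a rel \<Rightarrow> bool" where
  "partial_order_rel A R \<longleftrightarrow> R \<subseteq> A \<times> A \<and> (\<forall>x\<in>A. (x, x) \<in> R) \<and> trans R \<and> antisym R"

definition plane_poset :: "'a set \<Rightarrow> 'a rel \<Rightarrow> 'a rel \<Rightarrow> bool" where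
  "plane_poset A h r \<longleftrightarrow> finite A \<and> partial_order_rel A h \<and> partial_order_rel A r \<and>
     (\<forall>x\<in>A. \<forall>y\<in>A. x \<noteq> y \<longrightarrow>
        (((x, y) \<in> h \<or> (y, x) \<in> h) \<longleftrightarrow> \<not> ((x, y) \<in> r \<or> (y, x) \<in> r)))"

text \<open>Isomorphism classes of plane posets are represented by canonical representatives:
plane posets on {0..<n} whose total order (x \<le> y iff x \<le>_h y or x \<le>_r y) is the
natural order on nat. By the known fact that this relation is a total order, and since
isomorphisms preserve it, every isomorphism class contains exactly one canonical
representative.\<close>

definition canonical_pp :: "nat \<times> nat rel \<times> nat rel \<Rightarrow> bool" where
  "canonical_pp p = (case p of (n, h, r) \<Rightarrow>
     plane_poset {0..<n} h r \<and> (\<forall>i<n. \<forall>j<n. (i \<le> j \<longleftrightarrow> (i, j) \<in> h \<or> (i, j) \<in> r)))"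

typedef pp = "{p. canonical_pp p}"
proof
  show "(0, {}, {}) \<in> {p. canonical_pp p}"
    by (simp add: canonical_pp_def plane_poset_def partial_order_rel_def trans_def antisym_def)
qed

definition pp_size :: "pp \<Rightarrow> nat" where "pp_size P = fst (Rep_pp P)"
definition pp_h :: "pp \<Rightarrow> nat rel" where "pp_h P = fst (snd (Rep_pp P))"
definition pp_r :: "pp \<Rightarrow> nat rel" where "pp_r P = snd (snd (Rep_pp P))"

definition shift_rel :: "nat \<Rightarrow> nat rel \<Rightarrow> nat rel" where
  "shift_rel k R = (\<lambda>(i, j). (i + k, j + k)) ` R"

definition pp_concat :: "pp \<Rightarrow> pp \<Rightarrow> pp" where
  "pp_concat P Q = Abs_pp (pp_size P + pp_size Q,
      pp_h P \<union> shift_rel (pp_size P) (pp_h Q),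
      pp_r P \<union> shift_rel (pp_size P) (pp_r Q) \<union>
        {(i, pp_size P + j) | i j. i < pp_size P \<and> j < pp_size Q})"

definition pp_under :: "pp \<Rightarrow> pp \<Rightarrow> pp" where
  "pp_under P Q = Abs_pp (pp_size P + pp_size Q,
      pp_h P \<union> shift_rel (pp_size P) (pp_h Q) \<union>
        {(i, pp_size P + j) | i j. i < pp_size P \<and> j < pp_size Q},
      pp_r P \<union> shift_rel (pp_size P) (pp_r Q))"

text \<open>For canonical representatives of equal cardinality
the increasing bijection theta is the identity; iota(P) \<le> Q means:
theta(x) \<le>_h theta(y) in Q implies x \<le>_h y in iota(P), i.e. x \<le>_r y in P.
For different cardinalities the pairing is 0.\<close>

definition pp_leq_iota :: "pp \<Rightarrow> pp \<Rightarrow> bool" where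
  "pp_leq_iota P Q \<longleftrightarrow> pp_size P = pp_size Q \<and>
     (\<forall>x<pp_size P. \<forall>y<pp_size P. (x, y) \<in> pp_h Q \<longrightarrow> (x, y) \<in> pp_r P)"

definition pp_phi :: "pp \<Rightarrow> pp \<Rightarrow> nat" where
  "pp_phi P Q = card {(x, y). x \<noteq> y \<and> (x, y) \<in> pp_r P \<and> (x, y) \<in> pp_h Q}
              + card {(x, y). x \<noteq> y \<and> (x, y) \<in> pp_h P \<and> (x, y) \<in> pp_r Q}"

definition pp_pair :: "'k::field \<Rightarrow> pp \<Rightarrow> pp \<Rightarrow> 'k" where
  "pp_pair q P Q = (if pp_leq_iota P Q then q ^ pp_phi P Q else 0)"

type_synonym 'k hpp = "pp \<Rightarrow>\<^sub>0 'k"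
type_synonym 'k hpp2 = "(pp \<times> pp) \<Rightarrow>\<^sub>0 'k"

definition under :: "'k::field hpp \<Rightarrow> 'k hpp \<Rightarrow> 'k hpp" where
  "under x y = (\<Sum>a\<in>Poly_Mapping.keys x. \<Sum>b\<in>Poly_Mapping.keys y.
      Poly_Mapping.single (pp_under a b) (Poly_Mapping.lookup x a * Poly_Mapping.lookup y b))"

definition tensor :: "'k::field hpp \<Rightarrow> 'k hpp \<Rightarrow> 'k hpp2" where
  "tensor x y = (\<Sum>a\<in>Poly_Mapping.keys x. \<Sum>b\<in>Poly_Mapping.keys y.
      Poly_Mapping.single (a, b) (Poly_Mapping.lookup x a * Poly_Mapping.lookup y b))"

definition pairing :: "'k::field \<Rightarrow> 'k hpp \<Rightarrow> 'k hpp \<Rightarrow> 'k" where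
  "pairing q x z = (\<Sum>a\<in>Poly_Mapping.keys x. \<Sum>c\<in>Poly_Mapping.keys z. Poly_Mapping.lookup x a * Poly_Mapping.lookup z c * pp_pair q a c)"

definition pairing2 :: "'k::field \<Rightarrow> 'k hpp2 \<Rightarrow> 'k hpp2 \<Rightarrow> 'k" where
  "pairing2 q T U = (\<Sum>ab\<in>Poly_Mapping.keys T. \<Sum>cd\<in>Poly_Mapping.keys U.
      Poly_Mapping.lookup T ab * Poly_Mapping.lookup U cd * pp_pair q (fst ab) (fst cd) * pp_pair q (snd ab) (snd cd))"

definition coprod :: "'k::field \<Rightarrow> 'k hpp \<Rightarrow> 'k hpp2" where
  "coprod q z = (\<Sum>c\<in>Poly_Mapping.keys z. \<Sum>p\<in>{(P1, P2). pp_concat P1 P2 = c}.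
      Poly_Mapping.single p (Poly_Mapping.lookup z c * q ^ (pp_size (fst p) * pp_size (snd p))))"

end

theory Submission
  imports Defs
begin

text \<open>On basis elements the identity reads
  \<open>\<langle>a \<triangleleft> b, c\<rangle> = (\<Sum>P\<^sub>1P\<^sub>2 = c. q^(|P\<^sub>1||P\<^sub>2|) \<langle>a, P\<^sub>1\<rangle> \<langle>b, P\<^sub>2\<rangle>)\<close>.
  A factorisation \<open>P\<^sub>1P\<^sub>2 = c\<close> is determined by \<open>|P\<^sub>1|\<close>, and a term can only be nonzero
  when \<open>|P\<^sub>1| = |a|\<close> and \<open>|P\<^sub>2| = |b|\<close>, so the sum has at most one nonzero term.
  When the sizes match, the condition \<open>\<iota>(a \<triangleleft> b) \<le> P\<^sub>1P\<^sub>2\<close> splits into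
  \<open>\<iota>(a) \<le> P\<^sub>1\<close> and \<open>\<iota>(b) \<le> P\<^sub>2\<close>, and \<open>\<phi>(a \<triangleleft> b, P\<^sub>1P\<^sub>2)\<close> is
  \<open>\<phi>(a, P\<^sub>1) + \<phi>(b, P\<^sub>2)\<close> plus the \<open>|a||b|\<close> pairs that are \<open><\<^sub>h\<close>-related in
  \<open>a \<triangleleft> b\<close> and \<open><\<^sub>r\<close>-related in \<open>P\<^sub>1P\<^sub>2\<close>. Conversely, if
  \<open>\<iota>(a \<triangleleft> b) \<le> c\<close> then no element among the first \<open>|a|\<close> of \<open>c\<close> is
  \<open>\<le>\<^sub>h\<close>-below one of the others, so \<open>c\<close> is the concatenation of its initial and final
  segments. The general identity follows by bilinearity.\<close>

lemma canonical_pp_Rep: "canonical_pp (pp_size P, pp_h P, pp_r P)"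
  using Rep_pp[of P] by (simp add: pp_size_def pp_h_def pp_r_def)

lemma pp_eqI:
  assumes "pp_size P = pp_size Q" "pp_h P = pp_h Q" "pp_r P = pp_r Q"
  shows "P = Q"
  using assms unfolding pp_size_def pp_h_def pp_r_def
  by (metis Rep_pp_inject prod.collapse)

lemma pp_fields_Abs_pp:
  assumes "canonical_pp (n, h, r)"
  shows "pp_size (Abs_pp (n, h, r)) = n" "pp_h (Abs_pp (n, h, r)) = h" "pp_r (Abs_pp (n, h, r)) = r"
  using Abs_pp_inverse[of "(n, h, r)"] assms by (simp_all add: pp_size_def pp_h_def pp_r_def)

lemma canonical_ppD:
  assumes "canonical_pp (n, h, r)"
  shows "h \<subseteq> {0..<n} \<times> {0..<n}" "r \<subseteq> {0..<n} \<times> {0..<n}"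
    "\<And>i j. (i, j) \<in> h \<Longrightarrow> i \<le> j" "\<And>i j. (i, j) \<in> r \<Longrightarrow> i \<le> j"
    "\<And>i j. i \<le> j \<Longrightarrow> j < n \<Longrightarrow> (i, j) \<in> h \<or> (i, j) \<in> r"
    "\<And>i j. i \<noteq> j \<Longrightarrow> (i, j) \<in> h \<Longrightarrow> (i, j) \<notin> r"
    "trans h" "trans r"
    "\<And>i. i < n \<Longrightarrow> (i, i) \<in> h" "\<And>i. i < n \<Longrightarrow> (i, i) \<in> r"
proof -
  have ph: "partial_order_rel {0..<n} h" and pr: "partial_order_rel {0..<n} r"
    and plane: "\<forall>x\<in>{0..<n}. \<forall>y\<in>{0..<n}. x \<noteq> y \<longrightarrow>
        (((x, y) \<in> h \<or> (y, x) \<in> h) \<longleftrightarrow> \<not> ((x, y) \<in> r \<or> (y, x) \<in> r))"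
    and tot: "\<forall>i<n. \<forall>j<n. (i \<le> j \<longleftrightarrow> (i, j) \<in> h \<or> (i, j) \<in> r)"
    using assms by (simp_all add: canonical_pp_def plane_poset_def)
  show hs: "h \<subseteq> {0..<n} \<times> {0..<n}" and rs: "r \<subseteq> {0..<n} \<times> {0..<n}"
    and "trans h" "trans r" "\<And>i. i < n \<Longrightarrow> (i, i) \<in> h" "\<And>i. i < n \<Longrightarrow> (i, i) \<in> r"
    using ph pr by (simp_all add: partial_order_rel_def)
  show "i \<le> j" if "(i, j) \<in> h" for i j
  proof -
    have "i < n" "j < n" using that hs by auto
    then show ?thesis using that tot by blast
  qed
  show "i \<le> j" if "(i, j) \<in> r" for i j
  proof -
    have "i < n" "j < n" using that rs by auto
    then show ?thesis using that tot by blast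
  qed
  show "\<And>i j. i \<le> j \<Longrightarrow> j < n \<Longrightarrow> (i, j) \<in> h \<or> (i, j) \<in> r"
    using tot by (meson le_less_trans)
  show "(i, j) \<notin> r" if "i \<noteq> j" "(i, j) \<in> h" for i j
  proof -
    have "i \<in> {0..<n}" "j \<in> {0..<n}" using that(2) hs by auto
    then show ?thesis using plane that by (meson bspec)
  qed
qed

lemma canonical_ppI:
  assumes "h \<subseteq> {0..<n} \<times> {0..<n}" "r \<subseteq> {0..<n} \<times> {0..<n}"
    "\<And>i. i < n \<Longrightarrow> (i, i) \<in> h" "\<And>i. i < n \<Longrightarrow> (i, i) \<in> r"
    "\<And>i j. (i, j) \<in> h \<Longrightarrow> i \<le> j" "\<And>i j. (i, j) \<in> r \<Longrightarrow> i \<le> j"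
    "\<And>i j. i \<le> j \<Longrightarrow> j < n \<Longrightarrow> (i, j) \<in> h \<or> (i, j) \<in> r"
    "\<And>i j. i \<noteq> j \<Longrightarrow> (i, j) \<in> h \<Longrightarrow> (i, j) \<notin> r"
    "trans h" "trans r"
  shows "canonical_pp (n, h, r)"
proof -
  have antisym: "antisym h" "antisym r" using assms(5,6) by (metis antisymI le_antisym)+
  have plane: "\<forall>x\<in>{0..<n}. \<forall>y\<in>{0..<n}. x \<noteq> y \<longrightarrow>
        (((x, y) \<in> h \<or> (y, x) \<in> h) \<longleftrightarrow> \<not> ((x, y) \<in> r \<or> (y, x) \<in> r))"
  proof (intro ballI impI iffI)
    fix x y assume "x \<noteq> y" "(x, y) \<in> h \<or> (y, x) \<in> h"
    then show "\<not> ((x, y) \<in> r \<or> (y, x) \<in> r)"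
      using assms(5,6,8) by (metis le_antisym)
  next
    fix x y assume "x \<in> {0..<n}" "y \<in> {0..<n}" "\<not> ((x, y) \<in> r \<or> (y, x) \<in> r)"
    then show "(x, y) \<in> h \<or> (y, x) \<in> h"
      using assms(7)[of x y] assms(7)[of y x] by (cases "x \<le> y") auto
  qed
  show ?thesis
    unfolding canonical_pp_def plane_poset_def partial_order_rel_def
    using assms antisym plane by (auto, blast+)
qed

lemma canonical_pp_swap: "canonical_pp (n, h, r) \<Longrightarrow> canonical_pp (n, r, h)"
  unfolding canonical_pp_def plane_poset_def by auto

lemmas pp_h_subset = canonical_ppD(1)[OF canonical_pp_Rep]
  and pp_r_subset = canonical_ppD(2)[OF canonical_pp_Rep]
  and pp_h_le = canonical_ppD(3)[OF canonical_pp_Rep]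
  and pp_r_le = canonical_ppD(4)[OF canonical_pp_Rep]
  and pp_h_or_r = canonical_ppD(5)[OF canonical_pp_Rep]

definition cross_rel :: "nat \<Rightarrow> nat \<Rightarrow> nat rel" where
  "cross_rel k m = {(i, k + j) | i j. i < k \<and> j < m}"

lemma mem_shift_rel: "(a, b) \<in> shift_rel k R \<longleftrightarrow> k \<le> a \<and> k \<le> b \<and> (a - k, b - k) \<in> R"
  unfolding shift_rel_def by (auto simp: image_iff intro!: bexI[of _ "(a - k, b - k)"])

lemma mem_cross_rel: "(a, b) \<in> cross_rel k m \<longleftrightarrow> a < k \<and> k \<le> b \<and> b < k + m"
proof
  assume "a < k \<and> k \<le> b \<and> b < k + m"
  then show "(a, b) \<in> cross_rel k m"
    unfolding cross_rel_def by (intro CollectI exI[of _ a] exI[of _ "b - k"]) auto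
qed (auto simp: cross_rel_def)

lemma trans_Un_shift_rel:
  assumes "R1 \<subseteq> {0..<k} \<times> {0..<k}" "trans R1" "trans R2"
  shows "trans (R1 \<union> shift_rel k R2)"
proof (rule transI)
  fix x y z assume "(x, y) \<in> R1 \<union> shift_rel k R2" "(y, z) \<in> R1 \<union> shift_rel k R2"
  then consider "(x, y) \<in> R1" "(y, z) \<in> R1" | "(x, y) \<in> shift_rel k R2" "(y, z) \<in> shift_rel k R2"
    using assms(1) by (auto simp: mem_shift_rel)
  then show "(x, z) \<in> R1 \<union> shift_rel k R2"
    by cases (use assms(2,3) in \<open>auto simp: mem_shift_rel dest: transD\<close>)
qed

lemma trans_Un_shift_rel_cross_rel:
  assumes "R1 \<subseteq> {0..<k} \<times> {0..<k}" "trans R1" "R2 \<subseteq> {0..<m} \<times> {0..<m}" "trans R2"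
  shows "trans (R1 \<union> shift_rel k R2 \<union> cross_rel k m)"
proof (rule transI)
  let ?R = "R1 \<union> shift_rel k R2"
  fix x y z assume xy: "(x, y) \<in> ?R \<union> cross_rel k m" and yz: "(y, z) \<in> ?R \<union> cross_rel k m"
  have "(x, z) \<in> ?R \<or> (x, z) \<in> cross_rel k m"
  proof (cases "(x, y) \<in> ?R \<and> (y, z) \<in> ?R")
    case True
    then show ?thesis using trans_Un_shift_rel[OF assms(1,2,4)] by (meson transD)
  next
    case False
    then consider "(x, y) \<in> cross_rel k m" "(y, z) \<in> shift_rel k R2"
      | "(x, y) \<in> R1" "(y, z) \<in> cross_rel k m"
      using xy yz assms(1,3) by (auto simp: mem_shift_rel mem_cross_rel)
    then show ?thesis
      by cases (use assms(1,3) in \<open>auto simp: mem_shift_rel mem_cross_rel\<close>)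
  qed
  then show "(x, z) \<in> ?R \<union> cross_rel k m" by blast
qed

lemma canonical_pp_concat_rel:
  assumes P: "canonical_pp (k, h1, r1)" and Q: "canonical_pp (m, h2, r2)"
  shows "canonical_pp (k + m, h1 \<union> shift_rel k h2, r1 \<union> shift_rel k r2 \<union> cross_rel k m)"
proof (rule canonical_ppI)
  note A = canonical_ppD[OF P] and B = canonical_ppD[OF Q]
  show "(i, i) \<in> h1 \<union> shift_rel k h2" if "i < k + m" for i
    using that A(9)[of i] B(9)[of "i - k"] by (cases "i < k") (auto simp: mem_shift_rel)
  show "(i, i) \<in> r1 \<union> shift_rel k r2 \<union> cross_rel k m" if "i < k + m" for i
    using that A(10)[of i] B(10)[of "i - k"] by (cases "i < k") (auto simp: mem_shift_rel)
  show "(i, j) \<in> h1 \<union> shift_rel k h2 \<or> (i, j) \<in> r1 \<union> shift_rel k r2 \<union> cross_rel k m"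
    if "i \<le> j" "j < k + m" for i j
    using that A(5)[of i j] B(5)[of "i - k" "j - k"] by (auto simp: mem_shift_rel mem_cross_rel)
  show "i \<le> j" if "(i, j) \<in> h1 \<union> shift_rel k h2" for i j
    using that A(3) B(3) by (auto simp: mem_shift_rel) (metis le_diff_iff)
  show "i \<le> j" if "(i, j) \<in> r1 \<union> shift_rel k r2 \<union> cross_rel k m" for i j
    using that A(4) B(4) by (auto simp: mem_shift_rel mem_cross_rel) (metis le_diff_iff)
  show "trans (h1 \<union> shift_rel k h2)"
    using A(1,7) B(7) by (rule trans_Un_shift_rel)
  show "trans (r1 \<union> shift_rel k r2 \<union> cross_rel k m)"
    using A(2,8) B(2,8) by (rule trans_Un_shift_rel_cross_rel)
qed (use canonical_ppD[OF P] canonical_ppD[OF Q] in \<open>auto simp: mem_shift_rel mem_cross_rel\<close>)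

lemma pp_concat_fields:
  "pp_size (pp_concat P Q) = pp_size P + pp_size Q"
  "pp_h (pp_concat P Q) = pp_h P \<union> shift_rel (pp_size P) (pp_h Q)"
  "pp_r (pp_concat P Q) = pp_r P \<union> shift_rel (pp_size P) (pp_r Q) \<union> cross_rel (pp_size P) (pp_size Q)"
  using pp_fields_Abs_pp[OF canonical_pp_concat_rel[OF canonical_pp_Rep canonical_pp_Rep]]
  by (simp_all add: pp_concat_def cross_rel_def)

lemma pp_under_fields:
  "pp_size (pp_under P Q) = pp_size P + pp_size Q"
  "pp_h (pp_under P Q) = pp_h P \<union> shift_rel (pp_size P) (pp_h Q) \<union> cross_rel (pp_size P) (pp_size Q)"
  "pp_r (pp_under P Q) = pp_r P \<union> shift_rel (pp_size P) (pp_r Q)"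
  using pp_fields_Abs_pp[OF canonical_pp_swap[OF canonical_pp_concat_rel[OF
      canonical_pp_swap[OF canonical_pp_Rep] canonical_pp_swap[OF canonical_pp_Rep]]]]
  by (simp_all add: pp_under_def cross_rel_def)

definition slice_rel :: "nat \<Rightarrow> nat \<Rightarrow> nat rel \<Rightarrow> nat rel" where
  "slice_rel k m R = {(i, j). i < m \<and> j < m \<and> (i + k, j + k) \<in> R}"

text \<open>The plane subposet of \<open>c\<close> on the interval \<open>{k..<k + m}\<close>, re-indexed from \<open>0\<close>;
  it is only meaningful when \<open>k + m \<le> pp_size c\<close>.\<close>

definition pp_slice :: "pp \<Rightarrow> nat \<Rightarrow> nat \<Rightarrow> pp" where
  "pp_slice c k m = Abs_pp (m, slice_rel k m (pp_h c), slice_rel k m (pp_r c))"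

lemma canonical_pp_slice:
  assumes "k + m \<le> pp_size c"
  shows "canonical_pp (m, slice_rel k m (pp_h c), slice_rel k m (pp_r c))"
proof (rule canonical_ppI)
  note A = canonical_ppD[OF canonical_pp_Rep[of c]]
  show "trans (slice_rel k m (pp_h c))" "trans (slice_rel k m (pp_r c))"
    using A(7,8) unfolding trans_def slice_rel_def by blast+
  show "i \<le> j" if "(i, j) \<in> slice_rel k m (pp_h c)" for i j
    using that A(3)[of "i + k" "j + k"] by (simp add: slice_rel_def)
  show "i \<le> j" if "(i, j) \<in> slice_rel k m (pp_r c)" for i j
    using that A(4)[of "i + k" "j + k"] by (simp add: slice_rel_def)
qed (use canonical_ppD[OF canonical_pp_Rep[of c]] assms in \<open>auto simp: slice_rel_def\<close>)

lemma pp_slice_fields: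
  assumes "k + m \<le> pp_size c"
  shows "pp_size (pp_slice c k m) = m" "pp_h (pp_slice c k m) = slice_rel k m (pp_h c)"
    "pp_r (pp_slice c k m) = slice_rel k m (pp_r c)"
  using pp_fields_Abs_pp[OF canonical_pp_slice[OF assms]] by (simp_all add: pp_slice_def)

lemma pp_slice_concat_left: "pp_slice (pp_concat P Q) 0 (pp_size P) = P"
  using pp_slice_fields[of 0 "pp_size P" "pp_concat P Q"] pp_h_subset[of P] pp_r_subset[of P]
  by (intro pp_eqI) (auto simp: pp_concat_fields slice_rel_def mem_shift_rel mem_cross_rel)

lemma pp_slice_concat_right: "pp_slice (pp_concat P Q) (pp_size P) (pp_size Q) = Q"
  using pp_slice_fields[of "pp_size P" "pp_size Q" "pp_concat P Q"]
    pp_h_subset[of P] pp_r_subset[of P] pp_h_subset[of Q] pp_r_subset[of Q]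
  by (intro pp_eqI) (auto simp: pp_concat_fields slice_rel_def mem_shift_rel mem_cross_rel)

lemma pp_concat_slices:
  assumes size: "pp_size c = k + m"
    and no_h_across: "\<And>i j. i < k \<Longrightarrow> k \<le> j \<Longrightarrow> (i, j) \<notin> pp_h c"
  shows "pp_concat (pp_slice c 0 k) (pp_slice c k m) = c"
proof (rule pp_eqI)
  have r_across: "(i, j) \<in> pp_r c" if "i < k" "k \<le> j" "j < k + m" for i j
    using pp_h_or_r[of i j c] no_h_across[OF that(1,2)] that size by auto
  have h_within: "a \<le> b \<and> b < k + m \<and> (b < k \<or> k \<le> a)" if "(a, b) \<in> pp_h c" for a b
    using that no_h_across[of a b] pp_h_le[OF that] pp_h_subset[of c] size by fastforce
  have "0 + k \<le> pp_size c" "k + m \<le> pp_size c" using size by simp_all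
  note F = pp_slice_fields[OF this(1)] pp_slice_fields[OF this(2)]
  show "pp_size (pp_concat (pp_slice c 0 k) (pp_slice c k m)) = pp_size c"
    using size by (simp add: pp_concat_fields F)
  show "pp_h (pp_concat (pp_slice c 0 k) (pp_slice c k m)) = pp_h c"
  proof (rule set_eqI, clarify)
    fix a b
    show "(a, b) \<in> pp_h (pp_concat (pp_slice c 0 k) (pp_slice c k m)) \<longleftrightarrow> (a, b) \<in> pp_h c"
      using h_within[of a b] by (auto simp: pp_concat_fields F slice_rel_def mem_shift_rel)
  qed
  have r_within: "a \<le> b \<and> b < k + m" if "(a, b) \<in> pp_r c" for a b
    using that pp_r_le[OF that] pp_r_subset[of c] size by fastforce
  show "pp_r (pp_concat (pp_slice c 0 k) (pp_slice c k m)) = pp_r c"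
  proof (rule set_eqI, clarify)
    fix a b
    show "(a, b) \<in> pp_r (pp_concat (pp_slice c 0 k) (pp_slice c k m)) \<longleftrightarrow> (a, b) \<in> pp_r c"
      using r_within[of a b] r_across[of a b]
      by (auto simp: pp_concat_fields F slice_rel_def mem_shift_rel mem_cross_rel)
  qed
qed

definition common_pairs :: "nat rel \<Rightarrow> nat rel \<Rightarrow> nat rel" where
  "common_pairs X Y = {(x, y). x \<noteq> y \<and> (x, y) \<in> X \<and> (x, y) \<in> Y}"

lemma pp_phi_eq_card_common_pairs:
  "pp_phi P Q = card (common_pairs (pp_r P) (pp_h Q)) + card (common_pairs (pp_h P) (pp_r Q))"
  by (simp add: pp_phi_def common_pairs_def)

lemma common_pairs_subset: "common_pairs X Y \<subseteq> X"
  by (auto simp: common_pairs_def)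

lemma common_pairs_Un_shift_rel:
  assumes "X1 \<subseteq> {0..<k} \<times> {0..<k}" "Y1 \<subseteq> {0..<k} \<times> {0..<k}"
  shows "common_pairs (X1 \<union> shift_rel k X2) (Y1 \<union> shift_rel k Y2)
    = common_pairs X1 Y1 \<union> shift_rel k (common_pairs X2 Y2)"
  using assms by (auto simp: common_pairs_def mem_shift_rel)

lemma common_pairs_Un_cross_rel:
  "common_pairs (X \<union> cross_rel k m) (Y \<union> cross_rel k m) = common_pairs X Y \<union> cross_rel k m"
  by (auto simp: common_pairs_def mem_cross_rel)

lemma finite_shift_rel: "finite R \<Longrightarrow> finite (shift_rel k R)"
  by (simp add: shift_rel_def)

lemma finite_pp_h: "finite (pp_h P)" and finite_pp_r: "finite (pp_r P)"
  using pp_h_subset[of P] pp_r_subset[of P] by (auto intro: finite_subset)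

lemma card_shift_rel: "card (shift_rel k R) = card R"
  unfolding shift_rel_def by (rule card_image) (auto simp: inj_on_def)

lemma cross_rel_eq_image: "cross_rel k m = (\<lambda>(i, j). (i, k + j)) ` ({..<k} \<times> {..<m})"
  by (auto simp: cross_rel_def)

lemma card_cross_rel: "card (cross_rel k m) = k * m"
  unfolding cross_rel_eq_image
  by (subst card_image) (auto simp: inj_on_def card_cartesian_product)

lemma card_Un_shift_rel:
  assumes "R1 \<subseteq> {0..<k} \<times> {0..<k}" "finite R2"
  shows "card (R1 \<union> shift_rel k R2) = card R1 + card R2"
proof -
  have "finite R1" using assms(1) by (rule finite_subset) simp
  moreover have "R1 \<inter> shift_rel k R2 = {}" using assms(1) by (auto simp: mem_shift_rel)
  ultimately show ?thesis
    using assms(2) by (simp add: card_Un_disjoint finite_shift_rel card_shift_rel)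
qed

lemma card_Un_shift_rel_cross_rel:
  assumes "R1 \<subseteq> {0..<k} \<times> {0..<k}" "finite R2"
  shows "card (R1 \<union> shift_rel k R2 \<union> cross_rel k m) = card R1 + card R2 + k * m"
proof -
  have "finite (R1 \<union> shift_rel k R2)"
    using assms by (auto intro: finite_subset finite_shift_rel)
  moreover have "(R1 \<union> shift_rel k R2) \<inter> cross_rel k m = {}"
    using assms(1) by (auto simp: mem_shift_rel mem_cross_rel)
  moreover have "finite (cross_rel k m)" by (simp add: cross_rel_eq_image)
  ultimately show ?thesis
    by (simp add: card_Un_disjoint card_Un_shift_rel[OF assms] card_cross_rel)
qed

lemma pp_leq_iota_iff: "pp_leq_iota P Q \<longleftrightarrow> pp_size P = pp_size Q \<and> pp_h Q \<subseteq> pp_r P"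
  using pp_h_subset[of Q] by (auto simp: pp_leq_iota_def)

lemma Un_shift_rel_subset_iff:
  assumes "X1 \<subseteq> {0..<k} \<times> {0..<k}" "Y1 \<subseteq> {0..<k} \<times> {0..<k}"
  shows "X1 \<union> shift_rel k X2 \<subseteq> Y1 \<union> shift_rel k Y2 \<longleftrightarrow> X1 \<subseteq> Y1 \<and> X2 \<subseteq> Y2"
proof
  assume sub: "X1 \<union> shift_rel k X2 \<subseteq> Y1 \<union> shift_rel k Y2"
  show "X1 \<subseteq> Y1 \<and> X2 \<subseteq> Y2"
  proof (intro conjI subsetI)
    fix p assume "p \<in> X1"
    then have "p \<in> Y1 \<union> shift_rel k Y2" "fst p < k" using sub assms(1) by auto
    then show "p \<in> Y1" by (cases p) (auto simp: mem_shift_rel)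
  next
    fix p assume "p \<in> X2"
    then have "(fst p + k, snd p + k) \<in> shift_rel k X2" by (simp add: mem_shift_rel)
    then have "(fst p + k, snd p + k) \<in> Y1 \<union> shift_rel k Y2" using sub by blast
    then show "p \<in> Y2" using assms(2) by (auto simp: mem_shift_rel)
  qed
qed (auto simp: mem_shift_rel)

lemma pp_leq_iota_under_concat:
  assumes "pp_size P1 = pp_size a" "pp_size P2 = pp_size b"
  shows "pp_leq_iota (pp_under a b) (pp_concat P1 P2) \<longleftrightarrow> pp_leq_iota a P1 \<and> pp_leq_iota b P2"
  using assms Un_shift_rel_subset_iff[OF pp_h_subset[of P1] pp_r_subset[of a, folded assms(1)]]
  by (simp add: pp_leq_iota_iff pp_under_fields pp_concat_fields)

lemma pp_phi_under_concat:
  assumes "pp_size P1 = pp_size a" "pp_size P2 = pp_size b"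
  shows "pp_phi (pp_under a b) (pp_concat P1 P2) = pp_phi a P1 + pp_phi b P2 + pp_size a * pp_size b"
proof -
  have bounded: "common_pairs (pp_r a) (pp_h P1) \<subseteq> {0..<pp_size a} \<times> {0..<pp_size a}"
    "common_pairs (pp_h a) (pp_r P1) \<subseteq> {0..<pp_size a} \<times> {0..<pp_size a}"
    using common_pairs_subset pp_r_subset[of a] pp_h_subset[of a] by blast+
  have finite_common: "finite (common_pairs X Y)" if "finite X" for X Y
    using that common_pairs_subset by (rule finite_subset[rotated])
  show ?thesis
    using assms pp_h_subset[of P1] pp_r_subset[of P1]
    by (simp add: pp_phi_eq_card_common_pairs pp_under_fields pp_concat_fields
        common_pairs_Un_cross_rel common_pairs_Un_shift_rel pp_h_subset pp_r_subset
        card_Un_shift_rel[OF bounded(1)] card_Un_shift_rel_cross_rel[OF bounded(2)]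
        finite_common finite_pp_h finite_pp_r)
qed

lemma pp_pair_under_concat:
  assumes "pp_size P1 = pp_size a" "pp_size P2 = pp_size b"
  shows "pp_pair q (pp_under a b) (pp_concat P1 P2)
    = q ^ (pp_size P1 * pp_size P2) * pp_pair q a P1 * pp_pair q b P2"
  by (simp add: pp_pair_def pp_leq_iota_under_concat[OF assms] pp_phi_under_concat[OF assms]
      assms power_add)

lemma pp_leq_iota_under_imp_concat:
  assumes "pp_leq_iota (pp_under a b) c"
  shows "pp_concat (pp_slice c 0 (pp_size a)) (pp_slice c (pp_size a) (pp_size b)) = c"
proof (rule pp_concat_slices)
  show "pp_size c = pp_size a + pp_size b"
    using assms by (simp add: pp_leq_iota_iff pp_under_fields)
  show "(i, j) \<notin> pp_h c" if "i < pp_size a" "pp_size a \<le> j" for i j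
  proof
    assume "(i, j) \<in> pp_h c"
    then have "(i, j) \<in> pp_r a \<union> shift_rel (pp_size a) (pp_r b)"
      using assms by (auto simp: pp_leq_iota_iff pp_under_fields)
    then show False using that pp_r_subset[of a] by (auto simp: mem_shift_rel)
  qed
qed

lemma finite_pp_concat_fiber: "finite {(P1, P2). pp_concat P1 P2 = c}"
proof (rule finite_subset)
  show "{(P1, P2). pp_concat P1 P2 = c}
    \<subseteq> (\<lambda>k. (pp_slice c 0 k, pp_slice c k (pp_size c - k))) ` {..pp_size c}"
  proof
    fix p assume "p \<in> {(P1, P2). pp_concat P1 P2 = c}"
    then obtain P1 P2 where "p = (P1, P2)" "c = pp_concat P1 P2" by auto
    then show "p \<in> (\<lambda>k. (pp_slice c 0 k, pp_slice c k (pp_size c - k))) ` {..pp_size c}"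
      using pp_slice_concat_left[of P1 P2] pp_slice_concat_right[of P1 P2]
      by (intro image_eqI[of _ _ "pp_size P1"]) (auto simp: pp_concat_fields)
  qed
qed simp

lemma pp_pair_under:
  "pp_pair q (pp_under a b) c = (\<Sum>p\<in>{(P1, P2). pp_concat P1 P2 = c}.
      q ^ (pp_size (fst p) * pp_size (snd p)) * pp_pair q a (fst p) * pp_pair q b (snd p))"
  (is "_ = sum ?f ?S")
proof -
  have sizes: "pp_size (fst p) = pp_size a \<and> pp_size (snd p) = pp_size b" if "?f p \<noteq> 0" for p
    using that by (auto simp: pp_pair_def pp_leq_iota_def split: if_splits)
  show ?thesis
  proof (cases "pp_leq_iota (pp_under a b) c")
    case True
    define c1 c2 where "c1 = pp_slice c 0 (pp_size a)" and "c2 = pp_slice c (pp_size a) (pp_size b)"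
    have c: "pp_concat c1 c2 = c"
      unfolding c1_def c2_def using True by (rule pp_leq_iota_under_imp_concat)
    have c_sizes: "pp_size c1 = pp_size a" "pp_size c2 = pp_size b"
      using True by (simp_all add: c1_def c2_def pp_slice_fields pp_leq_iota_iff pp_under_fields)
    have "?f p = 0" if "p \<in> ?S - {(c1, c2)}" for p
    proof (rule ccontr)
      assume "?f p \<noteq> 0"
      then have "fst p = c1" "snd p = c2"
        using that sizes[of p] pp_slice_concat_left[of "fst p" "snd p"]
          pp_slice_concat_right[of "fst p" "snd p"] by (auto simp: c1_def c2_def)
      then show False using that by auto
    qed
    then have "sum ?f ?S = ?f (c1, c2)"
      using c by (subst sum.mono_neutral_right[of ?S "{(c1, c2)}"])
        (auto simp: finite_pp_concat_fiber)
    then show ?thesis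
      using c c_sizes pp_pair_under_concat[OF c_sizes] by simp
  next
    case False
    have vanish: "?f p = 0" if "p \<in> ?S" for p
    proof (rule ccontr)
      assume "?f p \<noteq> 0"
      then have "pp_leq_iota a (fst p)" "pp_leq_iota b (snd p)"
        by (auto simp: pp_pair_def split: if_splits)
      then show False
        using False that sizes pp_leq_iota_under_concat[of "fst p" a "snd p" b] \<open>?f p \<noteq> 0\<close>
        by auto
    qed
    have "sum ?f ?S = 0" by (rule sum.neutral) (use vanish in blast)
    then show ?thesis using False by (simp add: pp_pair_def)
  qed
qed

lemma lookup_under:
  "Poly_Mapping.lookup (under x y) d = (\<Sum>a\<in>Poly_Mapping.keys x. \<Sum>b\<in>Poly_Mapping.keys y.
     if pp_under a b = d then Poly_Mapping.lookup x a * Poly_Mapping.lookup y b else 0)"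
  by (simp add: under_def lookup_sum lookup_single when_def)

lemma lookup_tensor:
  "Poly_Mapping.lookup (tensor x y) (a, b) = Poly_Mapping.lookup x a * Poly_Mapping.lookup y b"
proof -
  have "Poly_Mapping.lookup (tensor x y) (a, b) = (\<Sum>a'\<in>Poly_Mapping.keys x.
      if a' = a then \<Sum>b'\<in>Poly_Mapping.keys y.
        if b' = b then Poly_Mapping.lookup x a' * Poly_Mapping.lookup y b' else 0 else 0)"
    unfolding tensor_def lookup_sum lookup_single when_def
    by (intro sum.cong refl) auto
  then show ?thesis by (simp add: in_keys_iff)
qed

lemma lookup_coprod:
  "Poly_Mapping.lookup (coprod q z) (P1, P2)
    = Poly_Mapping.lookup z (pp_concat P1 P2) * q ^ (pp_size P1 * pp_size P2)"
  by (simp add: coprod_def lookup_sum lookup_single when_def finite_pp_concat_fiber in_keys_iff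
      eq_commute[of "(P1, P2)"] sum.delta' cong: if_cong)

lemma keys_sum_subset:
  assumes "\<And>i. i \<in> I \<Longrightarrow> Poly_Mapping.keys (F i) \<subseteq> A"
  shows "Poly_Mapping.keys (sum F I) \<subseteq> A"
  using keys_sum[of F I] assms by blast

lemma keys_tensor: "Poly_Mapping.keys (tensor x y) \<subseteq> Poly_Mapping.keys x \<times> Poly_Mapping.keys y"
  unfolding tensor_def by (intro keys_sum_subset) simp

lemma keys_coprod:
  "Poly_Mapping.keys (coprod q z) \<subseteq> (\<Union>c\<in>Poly_Mapping.keys z. {(P1, P2). pp_concat P1 P2 = c})"
  unfolding coprod_def by (intro keys_sum_subset) auto

lemma pairing_eq_sum_superset:
  assumes "finite D" "Poly_Mapping.keys x \<subseteq> D"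
  shows "pairing q x z = (\<Sum>d\<in>D. Poly_Mapping.lookup x d *
      (\<Sum>c\<in>Poly_Mapping.keys z. Poly_Mapping.lookup z c * pp_pair q d c))"
  unfolding pairing_def sum_distrib_left mult.assoc
  by (rule sum.mono_neutral_left) (use assms in \<open>auto simp: in_keys_iff\<close>)

lemma pairing_under:
  "pairing q (under x y) z = (\<Sum>a\<in>Poly_Mapping.keys x. \<Sum>b\<in>Poly_Mapping.keys y.
      Poly_Mapping.lookup x a * Poly_Mapping.lookup y b *
      (\<Sum>c\<in>Poly_Mapping.keys z. Poly_Mapping.lookup z c * pp_pair q (pp_under a b) c))"
proof -
  let ?G = "\<lambda>d. \<Sum>c\<in>Poly_Mapping.keys z. Poly_Mapping.lookup z c * pp_pair q d c"
  define D where "D = Poly_Mapping.keys (under x y)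
    \<union> (\<lambda>(a, b). pp_under a b) ` (Poly_Mapping.keys x \<times> Poly_Mapping.keys y)"
  have "finite D" by (simp add: D_def)
  then have "pairing q (under x y) z = (\<Sum>d\<in>D. Poly_Mapping.lookup (under x y) d * ?G d)"
    by (rule pairing_eq_sum_superset) (simp add: D_def)
  also have "\<dots> = (\<Sum>d\<in>D. \<Sum>a\<in>Poly_Mapping.keys x. \<Sum>b\<in>Poly_Mapping.keys y.
      if pp_under a b = d then Poly_Mapping.lookup x a * Poly_Mapping.lookup y b * ?G d else 0)"
    by (simp add: lookup_under sum_distrib_right if_distrib[of "\<lambda>t. t * _"] cong: if_cong)
  also have "\<dots> = (\<Sum>a\<in>Poly_Mapping.keys x. \<Sum>b\<in>Poly_Mapping.keys y. \<Sum>d\<in>D.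
      if pp_under a b = d then Poly_Mapping.lookup x a * Poly_Mapping.lookup y b * ?G d else 0)"
    by (subst sum.swap, rule sum.cong, rule refl, rule sum.swap)
  also have "\<dots> = (\<Sum>a\<in>Poly_Mapping.keys x. \<Sum>b\<in>Poly_Mapping.keys y.
      Poly_Mapping.lookup x a * Poly_Mapping.lookup y b * ?G (pp_under a b))"
    using \<open>finite D\<close> by (intro sum.cong refl) (auto simp: D_def)
  finally show ?thesis .
qed

lemma pairing2_tensor:
  "pairing2 q (tensor x y) U = (\<Sum>a\<in>Poly_Mapping.keys x. \<Sum>b\<in>Poly_Mapping.keys y.
      Poly_Mapping.lookup x a * Poly_Mapping.lookup y b *
      (\<Sum>p\<in>Poly_Mapping.keys U. Poly_Mapping.lookup U p * pp_pair q a (fst p) * pp_pair q b (snd p)))"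
proof -
  have "pairing2 q (tensor x y) U = (\<Sum>(a, b)\<in>Poly_Mapping.keys x \<times> Poly_Mapping.keys y.
      \<Sum>p\<in>Poly_Mapping.keys U. Poly_Mapping.lookup (tensor x y) (a, b) * Poly_Mapping.lookup U p *
        pp_pair q a (fst p) * pp_pair q b (snd p))"
    unfolding pairing2_def split_def prod.collapse using keys_tensor
    by (intro sum.mono_neutral_left) (auto simp: in_keys_iff)
  then show ?thesis
    by (simp add: sum.cartesian_product[symmetric] lookup_tensor sum_distrib_left mult.assoc)
qed

lemma sum_keys_coprod:
  "(\<Sum>p\<in>Poly_Mapping.keys (coprod q z). Poly_Mapping.lookup (coprod q z) p * f p)
    = (\<Sum>c\<in>Poly_Mapping.keys z. Poly_Mapping.lookup z c *
        (\<Sum>p\<in>{(P1, P2). pp_concat P1 P2 = c}. q ^ (pp_size (fst p) * pp_size (snd p)) * f p))"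
proof -
  let ?S = "\<lambda>c. {(P1, P2). pp_concat P1 P2 = c}"
  let ?g = "\<lambda>p. Poly_Mapping.lookup (coprod q z) p * f p"
  have "sum ?g (Poly_Mapping.keys (coprod q z)) = sum ?g (\<Union>c\<in>Poly_Mapping.keys z. ?S c)"
    using keys_coprod by (intro sum.mono_neutral_left) (auto simp: finite_pp_concat_fiber in_keys_iff)
  also have "\<dots> = (\<Sum>c\<in>Poly_Mapping.keys z. sum ?g (?S c))"
    by (rule sum.UNION_disjoint) (auto simp: finite_pp_concat_fiber)
  also have "\<dots> = (\<Sum>c\<in>Poly_Mapping.keys z. Poly_Mapping.lookup z c *
        (\<Sum>p\<in>?S c. q ^ (pp_size (fst p) * pp_size (snd p)) * f p))"
    by (intro sum.cong refl) (auto simp: lookup_coprod sum_distrib_left mult.assoc intro!: sum.cong)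
  finally show ?thesis .
qed

theorem proposition24:
  fixes q :: "'k::field" and x y z :: "'k hpp"
  shows "pairing q (under x y) z = pairing2 q (tensor x y) (coprod q z)"
proof -
  have "(\<Sum>c\<in>Poly_Mapping.keys z. Poly_Mapping.lookup z c * pp_pair q (pp_under a b) c)
      = (\<Sum>p\<in>Poly_Mapping.keys (coprod q z).
          Poly_Mapping.lookup (coprod q z) p * (pp_pair q a (fst p) * pp_pair q b (snd p)))" for a b
    by (simp add: pp_pair_under sum_keys_coprod mult.assoc)
  then show ?thesis
    by (simp add: pairing_under pairing2_tensor mult.assoc)
qed

end
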